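(* Let $\mu>0$ and let $X$ have the skew-symmetric-Laplace-uniform density with parameter $\mu$ (defined in the context). For $a\in\mathbb{R}$, the mean deviation $\eta_a=E|X-a|$ is $$\eta_a=\begin{cases} -\left(1+\frac{2}{\mu}\right)e^{-\mu}+\left(\frac{2}{\mu}-a\right) & a<-\mu,\\[2pt] \frac{a}{\mu}e^{-\mu}+\left(\frac{a}{\mu}-\frac{2}{\mu}+1\right)e^{a}+\left(\frac{2}{\mu}-a\right) & -\mu\le a<0,\\[2pt] \frac{a}{\mu}e^{-\mu}+\left(\frac{a}{\mu}+\frac{2}{\mu}+1\right)e^{-a}+\left(a-\frac{2}{\mu}\right) & 0\le a<\mu,\\[2pt] \left(1+\frac{2}{\mu}\right)e^{-\mu}+2e^{-a}+\left(a-\frac{2}{\mu}\right) & a\ge\mu.\end{cases}$$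
   Context: For $\mu\in\mathbb{R}\setminus\{0\}$, the skew-symmetric-Laplace-uniform distribution $SSLUD(\mu)$ is the distribution on $\mathbb{R}$ with density $$g(x)=\begin{cases} 0 & \text{if } x/\mu<-1,\\ e^{-|x|}\left(\dfrac{x}{2\mu}+\dfrac12\right) & \text{if } -1\le x/\mu<1,\\ e^{-|x|} & \text{if } x/\mu\ge 1.\end{cases}$$ *)

theory Defs
  imports "HOL-Probability.Probability"
begin

definition sslud_density :: "real \<Rightarrow> real \<Rightarrow> real" where
  "sslud_density \<mu> x =
     (if x / \<mu> < -1 then 0
      else if x / \<mu> < 1 then exp (- \<bar>x\<bar>) * (x / (2 * \<mu>) + 1 / 2)
      else exp (- \<bar>x\<bar>))"

end

theory Submission
  imports Defs "HOL-Real_Asymp.Real_Asymp"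
begin

text \<open>
  Let g be the density and \<Phi>(x) = - \<integral> (t - a) g(t) dt over t \<ge> x, which is
  \<open>sslud_prim \<mu> a\<close> below: a continuous primitive of (x - a) g(x) on [-\<mu>, \<infinity>), explicit on each of the pieces (-\<mu>, 0),
  (0, \<mu>), (\<mu>, \<infinity>) of the density, and vanishing at infinity. As g vanishes below -\<mu> and
  |x - a| = \<plusminus>(x - a) on either side of a, splitting the integral of g(x) |x - a| at
  max a (-\<mu>) gives E|X - a| = \<Phi>(-\<mu>) - 2 \<Phi>(max a (-\<mu>)), and evaluating \<Phi> gives the four cases.
\<close>

lemma nn_integral_FTC_Icc_interior_strong:
  fixes f F :: "real \<Rightarrow> real"
  assumes "finite S" "p \<le> q" "continuous_on {p..q} F"
    and "\<And>x. x \<in> {p<..<q} - S \<Longrightarrow> (F has_real_derivative f x) (at x)"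
    and "\<And>x. x \<in> {p..q} \<Longrightarrow> 0 \<le> f x"
  shows "(\<integral>\<^sup>+x. ennreal (f x) * indicator {p..q} x \<partial>lborel) = ennreal (F q - F p)"
    and "F p \<le> F q"
proof -
  have "(f has_integral F q - F p) {p..q}"
    using assms(1-4)
    by (intro fundamental_theorem_of_calculus_interior_strong)
       (auto simp: has_real_derivative_iff_has_vector_derivative[symmetric])
  then show "(\<integral>\<^sup>+x. ennreal (f x) * indicator {p..q} x \<partial>lborel) = ennreal (F q - F p)"
    and "F p \<le> F q"
    using assms(5) by (auto intro: nn_integral_has_integral_lebesgue' dest: has_integral_nonneg)
qed

lemma nn_integral_atLeast_split:
  fixes f :: "real \<Rightarrow> ennreal"
  assumes [measurable]: "f \<in> borel_measurable borel" and "p \<le> c"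
  shows "(\<integral>\<^sup>+x. f x * indicator {p..} x \<partial>lborel)
     = (\<integral>\<^sup>+x. f x * indicator {p..c} x \<partial>lborel) + (\<integral>\<^sup>+x. f x * indicator {c..} x \<partial>lborel)"
proof -
  have "(\<integral>\<^sup>+x. f x * indicator {p..} x \<partial>lborel)
     = (\<integral>\<^sup>+x. f x * indicator {p..c} x + f x * indicator {c..} x \<partial>lborel)"
    using AE_lborel_singleton[of c] assms(2)
    by (intro nn_integral_cong_AE) (auto elim!: eventually_mono split: split_indicator)
  also have "\<dots> = (\<integral>\<^sup>+x. f x * indicator {p..c} x \<partial>lborel) + (\<integral>\<^sup>+x. f x * indicator {c..} x \<partial>lborel)"
    by (rule nn_integral_add) auto
  finally show ?thesis .
qed

lemma sslud_density_nonneg: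
  assumes "\<mu> > 0"
  shows "0 \<le> sslud_density \<mu> x"
proof -
  have "0 \<le> x / (2 * \<mu>) + 1 / 2" if "\<not> x / \<mu> < -1"
    using that assms by (simp add: field_simps)
  then show ?thesis
    unfolding sslud_density_def by auto
qed

lemma sslud_density_eq_0: "\<mu> > 0 \<Longrightarrow> x < - \<mu> \<Longrightarrow> sslud_density \<mu> x = 0"
  by (auto simp: sslud_density_def field_simps)

lemma borel_measurable_sslud_density [measurable]: "sslud_density \<mu> \<in> borel_measurable borel"
  unfolding sslud_density_def by measurable

definition sslud_prim :: "real \<Rightarrow> real \<Rightarrow> real \<Rightarrow> real" where
  "sslud_prim \<mu> a x =
     (if x \<le> 0 then
        ((x\<^sup>2 + (\<mu> - a - 2) * x + (2 + a - \<mu> - a * \<mu>)) * exp x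
          + (\<mu> - a + 2) * exp (- \<mu>) + 2 * a * \<mu> - 4) / (2 * \<mu>)
      else if x \<le> \<mu> then
        ((\<mu> - a + 2) * exp (- \<mu>)
          - (x\<^sup>2 + (\<mu> - a + 2) * x + (\<mu> - a + 2 - a * \<mu>)) * exp (- x)) / (2 * \<mu>)
      else - (x - a + 1) * exp (- x))"

lemma sslud_prim_tail:
  assumes "\<mu> > 0" "\<mu> \<le> x"
  shows "sslud_prim \<mu> a x = - (x - a + 1) * exp (- x)"
  using assms by (auto simp: sslud_prim_def field_simps power2_eq_square)

lemma continuous_on_sslud_prim:
  assumes "\<mu> > 0"
  shows "continuous_on UNIV (sslud_prim \<mu> a)"
  unfolding sslud_prim_def
  using assms
  by (intro continuous_on_cases_le[where h = "\<lambda>x. x", of UNIV, simplified]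
        continuous_on_cases_le[where h = "\<lambda>x. x", simplified])
     (auto intro!: continuous_intros simp: field_simps power2_eq_square)

lemma sslud_prim_has_real_derivative:
  assumes "\<mu> > 0" "- \<mu> < x" "x \<noteq> 0" "x \<noteq> \<mu>"
  shows "(sslud_prim \<mu> a has_real_derivative (x - a) * sslud_density \<mu> x) (at x)"
proof -
  consider "x < 0" | "0 < x" "x < \<mu>" | "\<mu> < x" using assms by linarith
  then show ?thesis
  proof cases
    case 1
    have "((\<lambda>x. ((x\<^sup>2 + (\<mu> - a - 2) * x + (2 + a - \<mu> - a * \<mu>)) * exp x
          + (\<mu> - a + 2) * exp (- \<mu>) + 2 * a * \<mu> - 4) / (2 * \<mu>)) has_real_derivative (x - a) * sslud_density \<mu> x) (at x)"
      using assms 1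
      by (auto intro!: derivative_eq_intros simp: sslud_density_def field_simps power2_eq_square)
    then show ?thesis
      by (rule has_field_derivative_transform_within_open[where S = "{..<0}"])
         (use 1 in \<open>auto simp: sslud_prim_def\<close>)
  next
    case 2
    have "((\<lambda>x. ((\<mu> - a + 2) * exp (- \<mu>)
          - (x\<^sup>2 + (\<mu> - a + 2) * x + (\<mu> - a + 2 - a * \<mu>)) * exp (- x)) / (2 * \<mu>))
        has_real_derivative (x - a) * sslud_density \<mu> x) (at x)"
      using assms 2
      by (auto intro!: derivative_eq_intros simp: sslud_density_def field_simps power2_eq_square)
    then show ?thesis
      by (rule has_field_derivative_transform_within_open[where S = "{0<..<\<mu>}"])
         (use 2 in \<open>auto simp: sslud_prim_def\<close>)
  next
    case 3
    have "((\<lambda>x. - (x - a + 1) * exp (- x)) has_real_derivative (x - a) * sslud_density \<mu> x) (at x)"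
      using assms 3 by (auto intro!: derivative_eq_intros simp: sslud_density_def field_simps)
    then show ?thesis
      by (rule has_field_derivative_transform_within_open[where S = "{\<mu><..}"])
         (use assms 3 in \<open>auto simp: sslud_prim_def\<close>)
  qed
qed

lemma sslud_nn_integral_Icc_below:
  assumes "\<mu> > 0" "- \<mu> \<le> p" "p \<le> q" "q \<le> a"
  shows "(\<integral>\<^sup>+x. ennreal (sslud_density \<mu> x * \<bar>x - a\<bar>) * indicator {p..q} x \<partial>lborel)
      = ennreal (sslud_prim \<mu> a p - sslud_prim \<mu> a q)"
    and "sslud_prim \<mu> a q \<le> sslud_prim \<mu> a p"
proof -
  have deriv: "((\<lambda>x. - sslud_prim \<mu> a x) has_real_derivative sslud_density \<mu> x * \<bar>x - a\<bar>) (at x)"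
    if "x \<in> {p<..<q} - {0, \<mu>}" for x
    using sslud_prim_has_real_derivative[OF assms(1), of x a] that assms
    by (auto intro!: derivative_eq_intros simp: abs_if algebra_simps)
  have cont: "continuous_on {p..q} (\<lambda>x. - sslud_prim \<mu> a x)"
    using continuous_on_sslud_prim[OF assms(1)]
    by (auto intro: continuous_on_minus continuous_on_subset)
  have nonneg: "0 \<le> sslud_density \<mu> x * \<bar>x - a\<bar>" for x
    by (simp add: sslud_density_nonneg assms(1))
  from nn_integral_FTC_Icc_interior_strong[of "{0, \<mu>}", OF _ assms(3) cont deriv nonneg]
  show "(\<integral>\<^sup>+x. ennreal (sslud_density \<mu> x * \<bar>x - a\<bar>) * indicator {p..q} x \<partial>lborel)
      = ennreal (sslud_prim \<mu> a p - sslud_prim \<mu> a q)"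
    and "sslud_prim \<mu> a q \<le> sslud_prim \<mu> a p"
    by simp_all
qed

lemma sslud_nn_integral_Icc_above:
  assumes "\<mu> > 0" "- \<mu> \<le> p" "a \<le> p" "p \<le> q"
  shows "(\<integral>\<^sup>+x. ennreal (sslud_density \<mu> x * \<bar>x - a\<bar>) * indicator {p..q} x \<partial>lborel)
      = ennreal (sslud_prim \<mu> a q - sslud_prim \<mu> a p)"
    and "sslud_prim \<mu> a p \<le> sslud_prim \<mu> a q"
proof -
  have deriv: "(sslud_prim \<mu> a has_real_derivative sslud_density \<mu> x * \<bar>x - a\<bar>) (at x)"
    if "x \<in> {p<..<q} - {0, \<mu>}" for x
    using sslud_prim_has_real_derivative[OF assms(1), of x a] that assms
    by (auto simp: abs_if algebra_simps)
  have cont: "continuous_on {p..q} (sslud_prim \<mu> a)"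
    using continuous_on_sslud_prim[OF assms(1)] by (rule continuous_on_subset) simp
  have nonneg: "0 \<le> sslud_density \<mu> x * \<bar>x - a\<bar>" for x
    by (simp add: sslud_density_nonneg assms(1))
  from nn_integral_FTC_Icc_interior_strong[of "{0, \<mu>}", OF _ assms(4) cont deriv nonneg]
  show "(\<integral>\<^sup>+x. ennreal (sslud_density \<mu> x * \<bar>x - a\<bar>) * indicator {p..q} x \<partial>lborel)
      = ennreal (sslud_prim \<mu> a q - sslud_prim \<mu> a p)"
    and "sslud_prim \<mu> a p \<le> sslud_prim \<mu> a q"
    by simp_all
qed

lemma sslud_nn_integral_atLeast:
  assumes "\<mu> > 0" "- \<mu> \<le> p" "a \<le> p"
  shows "(\<integral>\<^sup>+x. ennreal (sslud_density \<mu> x * \<bar>x - a\<bar>) * indicator {p..} x \<partial>lborel)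
      = ennreal (- sslud_prim \<mu> a p)"
    and "sslud_prim \<mu> a p \<le> 0"
proof -
  define c where "c = max p \<mu>"
  have c: "p \<le> c" "\<mu> \<le> c" "a \<le> c"
    using assms by (auto simp: c_def)
  have "((\<lambda>x. - (x - a + 1) * exp (- x)) has_real_derivative sslud_density \<mu> x * \<bar>x - a\<bar>) (at x)"
    if "c \<le> x" for x
    using that c assms by (auto intro!: derivative_eq_intros simp: sslud_density_def field_simps)
  moreover have "((\<lambda>x. - (x - a + 1) * exp (- x)) \<longlongrightarrow> 0) at_top"
    by real_asymp
  ultimately have "(\<integral>\<^sup>+x. ennreal (sslud_density \<mu> x * \<bar>x - a\<bar>) * indicator {c..} x \<partial>lborel)
      = ennreal (0 - - (c - a + 1) * exp (- c))"
    using assms by (intro nn_integral_FTC_atLeast) (auto simp: sslud_density_nonneg)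
  then have tail: "(\<integral>\<^sup>+x. ennreal (sslud_density \<mu> x * \<bar>x - a\<bar>) * indicator {c..} x \<partial>lborel)
      = ennreal (- sslud_prim \<mu> a c)"
    using c assms by (simp add: sslud_prim_tail)
  have tail_nonneg: "sslud_prim \<mu> a c \<le> 0"
    using c assms by (auto simp: sslud_prim_tail intro!: mult_nonpos_nonneg)
  note head = sslud_nn_integral_Icc_above[OF assms c(1)]
  show "sslud_prim \<mu> a p \<le> 0"
    using head(2) tail_nonneg by linarith
  show "(\<integral>\<^sup>+x. ennreal (sslud_density \<mu> x * \<bar>x - a\<bar>) * indicator {p..} x \<partial>lborel)
      = ennreal (- sslud_prim \<mu> a p)"
    using head tail_nonneg
    by (simp add: nn_integral_atLeast_split[OF _ c(1)] tail ennreal_plus[symmetric] del: ennreal_plus)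
qed

lemma sslud_nn_integral_abs_sub:
  fixes \<mu> a :: real
  assumes "\<mu> > 0"
  defines "m \<equiv> sslud_prim \<mu> a (- \<mu>) - 2 * sslud_prim \<mu> a (max a (- \<mu>))"
  shows "(\<integral>\<^sup>+x. ennreal (sslud_density \<mu> x * \<bar>x - a\<bar>) \<partial>lborel) = ennreal m" and "0 \<le> m"
proof -
  have "(\<integral>\<^sup>+x. ennreal (sslud_density \<mu> x * \<bar>x - a\<bar>) \<partial>lborel)
      = (\<integral>\<^sup>+x. ennreal (sslud_density \<mu> x * \<bar>x - a\<bar>) * indicator {- \<mu>..} x \<partial>lborel)"
    using assms by (intro nn_integral_cong) (auto simp: sslud_density_eq_0 split: split_indicator)
  also have "\<dots> = ennreal m \<and> 0 \<le> m"
  proof (cases "a < - \<mu>")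
    case True
    then show ?thesis
      using sslud_nn_integral_atLeast[OF assms(1) order.refl, of a] by (simp add: m_def)
  next
    case False
    note below = sslud_nn_integral_Icc_below[of \<mu> "- \<mu>" a a]
      and above = sslud_nn_integral_atLeast[of \<mu> a a]
    show ?thesis
      using False assms(1) below above
      by (simp add: nn_integral_atLeast_split[of _ "- \<mu>" a] m_def ennreal_plus[symmetric] del: ennreal_plus)
  qed
  finally show "(\<integral>\<^sup>+x. ennreal (sslud_density \<mu> x * \<bar>x - a\<bar>) \<partial>lborel) = ennreal m" and "0 \<le> m"
    by simp_all
qed

lemma sslud_prim_closed_form:
  assumes "\<mu> > 0"
  shows "sslud_prim \<mu> a (- \<mu>) - 2 * sslud_prim \<mu> a (max a (- \<mu>)) =
    (if a < - \<mu> then - (1 + 2 / \<mu>) * exp (- \<mu>) + (2 / \<mu> - a)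
     else if a < 0 then a / \<mu> * exp (- \<mu>) + (a / \<mu> - 2 / \<mu> + 1) * exp a + (2 / \<mu> - a)
     else if a < \<mu> then a / \<mu> * exp (- \<mu>) + (a / \<mu> + 2 / \<mu> + 1) * exp (- a) + (a - 2 / \<mu>)
     else (1 + 2 / \<mu>) * exp (- \<mu>) + 2 * exp (- a) + (a - 2 / \<mu>))"
  using assms by (auto simp: sslud_prim_def field_simps power2_eq_square)

theorem mainTheorem7:
  fixes M :: "'a measure" and X :: "'a \<Rightarrow> real" and \<mu> a :: real
  assumes "prob_space M"
    and "\<mu> > 0"
    and "distributed M lborel X (\<lambda>x. ennreal (sslud_density \<mu> x))"
  shows "prob_space.expectation M (\<lambda>\<omega>. \<bar>X \<omega> - a\<bar>) =
    (if a < - \<mu> then - (1 + 2 / \<mu>) * exp (- \<mu>) + (2 / \<mu> - a)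
     else if a < 0 then a / \<mu> * exp (- \<mu>) + (a / \<mu> - 2 / \<mu> + 1) * exp a + (2 / \<mu> - a)
     else if a < \<mu> then a / \<mu> * exp (- \<mu>) + (a / \<mu> + 2 / \<mu> + 1) * exp (- a) + (a - 2 / \<mu>)
     else (1 + 2 / \<mu>) * exp (- \<mu>) + 2 * exp (- a) + (a - 2 / \<mu>))"
proof -
  interpret prob_space M by fact
  have "expectation (\<lambda>\<omega>. \<bar>X \<omega> - a\<bar>) = (\<integral>x. sslud_density \<mu> x * \<bar>x - a\<bar> \<partial>lborel)"
    using distributed_integral[OF assms(3), of "\<lambda>x. \<bar>x - a\<bar>"] assms(2)
    by (simp add: sslud_density_nonneg)
  also have "\<dots> = enn2real (\<integral>\<^sup>+x. ennreal (sslud_density \<mu> x * \<bar>x - a\<bar>) \<partial>lborel)"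
    using assms(2) by (intro integral_eq_nn_integral) (auto simp: sslud_density_nonneg)
  also have "\<dots> = sslud_prim \<mu> a (- \<mu>) - 2 * sslud_prim \<mu> a (max a (- \<mu>))"
    using sslud_nn_integral_abs_sub[OF assms(2), of a] by simp
  finally show ?thesis
    unfolding sslud_prim_closed_form[OF assms(2)] .
qed

end
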